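(* Let $n\geq 2$ and $r\geq 1$, and let $\rho$ be a partition of $[n]\times[r]$ such that $\rho\vee\pi=\widehat{1}$, where $\pi=\{\pi_1,\dots,\pi_n\}$ with $\pi_k=\{(k,1),\dots,(k,r)\}$. Then there exists $i\in\{1,\dots,n\}$ such that the set partition $\rho^{(i)}:=\{b\setminus\pi_i : b\in\rho,\ b\not\subset\pi_i\}$ of $(\{1,\dots,n\}\setminus\{i\})\times[r]$ is connected, i.e. $\rho^{(i)}\vee\{\pi_j : j\neq i\}$ is the one-block partition of $(\{1,\dots,n\}\setminus\{i\})\times[r]$.
   Context: $[n]=\{1,\dots,n\}$. For a finite set, $\rho\vee\sigma$ denotes the finest partition coarser than both $\rho$ and $\sigma$, and $\widehat{1}$ denotes the one-block partition. A partition $\rho$ of $\eta\times[r]$ ($\eta\subset[n]$) is called connected if $\rho\vee\{\pi_k:k\in\eta\}$ is the one-block partition of $\eta\times[r]$. *)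

theory Defs
  imports Main "HOL-Library.Disjoint_Sets"
begin

definition finer :: "'a set set \<Rightarrow> 'a set set \<Rightarrow> bool" where
  "finer \<rho> \<sigma> \<longleftrightarrow> (\<forall>b\<in>\<rho>. \<exists>c\<in>\<sigma>. b \<subseteq> c)"

definition pjoin :: "'a set \<Rightarrow> 'a set set \<Rightarrow> 'a set set \<Rightarrow> 'a set set" where
  "pjoin X \<rho> \<sigma> = (THE \<tau>. partition_on X \<tau> \<and> finer \<rho> \<tau> \<and> finer \<sigma> \<tau> \<and>
      (\<forall>\<tau>'. partition_on X \<tau>' \<and> finer \<rho> \<tau>' \<and> finer \<sigma> \<tau>' \<longrightarrow> finer \<tau> \<tau>'))"

definition piblk :: "nat \<Rightarrow> nat \<Rightarrow> (nat \<times> nat) set" where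
  "piblk r k = {k} \<times> {1..r}"

definition restr :: "nat \<Rightarrow> (nat \<times> nat) set set \<Rightarrow> nat \<Rightarrow> (nat \<times> nat) set set" where
  "restr r \<rho> i = {b - piblk r i | b. b \<in> \<rho> \<and> \<not> b \<subseteq> piblk r i}"

end

theory Submission
  imports Defs
begin

(* Let G be the graph on the rows 1..n in which k and l are adjacent when some block of rho
   meets both pi_k and pi_l. The sets that are unions of blocks of rho and of pi alike are
   exactly the products A x [r] with A closed under adjacency in G, so the hypothesis
   rho v pi = 1 says that G is connected. A block of rho^(i) meets the same rows as the block
   of rho it comes from, except row i, so the graph of rho^(i) is G - i. It therefore suffices
   that a finite connected graph has a vertex whose removal leaves it connected; a vertex at
   maximal distance from a fixed root does, because every other vertex is joined to the root
   through strictly closer ones. *)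

section \<open>Joins of set partitions\<close>

definition saturated :: "'a set set \<Rightarrow> 'a set \<Rightarrow> bool" where
  "saturated Q S \<longleftrightarrow> (\<forall>b\<in>Q. b \<subseteq> S \<or> b \<inter> S = {})"

definition is_pjoin :: "'a set \<Rightarrow> 'a set set \<Rightarrow> 'a set set \<Rightarrow> 'a set set \<Rightarrow> bool" where
  "is_pjoin X \<rho> \<sigma> \<tau> \<longleftrightarrow> partition_on X \<tau> \<and> finer \<rho> \<tau> \<and> finer \<sigma> \<tau> \<and>
      (\<forall>\<tau>'. partition_on X \<tau>' \<and> finer \<rho> \<tau>' \<and> finer \<sigma> \<tau>' \<longrightarrow> finer \<tau> \<tau>')"

lemma finer_antisym:
  assumes "partition_on X P" "partition_on X Q" "finer P Q" "finer Q P"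
  shows "P = Q"
  using assms refines_asym unfolding refines_def finer_def by blast

lemma pjoin_eqI: "is_pjoin X \<rho> \<sigma> \<tau> \<Longrightarrow> pjoin X \<rho> \<sigma> = \<tau>"
  unfolding pjoin_def is_pjoin_def[symmetric]
  by (rule the_equality) (meson finer_antisym is_pjoin_def)+

definition same_block :: "'a set set \<Rightarrow> 'a rel" where
  "same_block P = {(x, y). \<exists>p\<in>P. x \<in> p \<and> y \<in> p}"

lemma same_block_mono:
  assumes "finer P Q"
  shows "same_block P \<subseteq> same_block Q"
proof (rule subrelI)
  fix x y assume "(x, y) \<in> same_block P"
  then obtain p where "p \<in> P" "x \<in> p" "y \<in> p"
    unfolding same_block_def by blast
  moreover obtain q where "q \<in> Q" "p \<subseteq> q"
    using assms \<open>p \<in> P\<close> unfolding finer_def by blast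
  ultimately show "(x, y) \<in> same_block Q"
    unfolding same_block_def by blast
qed

lemma finer_quotientI:
  assumes "partition_on X P" "same_block P \<subseteq> E"
  shows "finer P (X // E)"
  unfolding finer_def
proof
  fix p assume "p \<in> P"
  then obtain x where "x \<in> p" "x \<in> X"
    using assms(1) unfolding partition_on_def by (metis UnionI ex_in_conv)
  then have "p \<subseteq> E `` {x}" "E `` {x} \<in> X // E"
    using \<open>p \<in> P\<close> assms(2) unfolding same_block_def by (blast, blast intro: quotientI)
  then show "\<exists>c\<in>X // E. p \<subseteq> c" by blast
qed

lemma quotient_finerI:
  assumes "partition_on X \<tau>" "E \<subseteq> same_block \<tau>"
  shows "finer (X // E) \<tau>"
  unfolding finer_def
proof
  fix q assume "q \<in> X // E"
  then obtain x where x: "x \<in> X" "q = E `` {x}"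
    by (auto elim: quotientE)
  have "same_block \<tau> `` {x} \<in> \<tau>"
    using quotientI[OF x(1), of "same_block \<tau>"] partition_on_eq_quotient[OF assms(1)]
    unfolding same_block_def by simp
  then show "\<exists>c\<in>\<tau>. q \<subseteq> c"
    using assms(2) x(2) by blast
qed

lemma ex_is_pjoin:
  assumes \<rho>: "partition_on X \<rho>" and \<sigma>: "partition_on X \<sigma>"
  shows "\<exists>\<tau>. is_pjoin X \<rho> \<sigma> \<tau>"
proof -
  define E where "E = (same_block \<rho> \<union> same_block \<sigma>)\<^sup>+"
  have "equiv X (same_block \<rho>)" "equiv X (same_block \<sigma>)"
    unfolding same_block_def using \<rho> \<sigma> by (blast intro: equiv_partition_on)+
  then have "same_block \<rho> \<union> same_block \<sigma> \<subseteq> X \<times> X" "refl_on X (same_block \<rho>)"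
    "sym (same_block \<rho> \<union> same_block \<sigma>)"
    by (auto simp: equiv_def intro: sym_Un)
  then have "E \<subseteq> X \<times> X" "refl_on X E" "sym E"
    unfolding E_def by (simp_all add: trancl_subset_Sigma sym_trancl refl_on_def r_into_trancl')
  then have "equiv X E"
    unfolding equiv_def E_def by auto
  have "same_block \<rho> \<subseteq> E" "same_block \<sigma> \<subseteq> E"
    unfolding E_def using trancl_incr[of "same_block \<rho> \<union> same_block \<sigma>"] by blast+
  then have "finer \<rho> (X // E)" "finer \<sigma> (X // E)"
    using finer_quotientI \<rho> \<sigma> by blast+
  moreover have "finer (X // E) \<tau>'"
    if \<tau>': "partition_on X \<tau>'" "finer \<rho> \<tau>'" "finer \<sigma> \<tau>'" for \<tau>'
  proof (rule quotient_finerI[OF \<tau>'(1)])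
    have "E \<subseteq> (same_block \<tau>')\<^sup>+"
      unfolding E_def using same_block_mono[OF \<tau>'(2)] same_block_mono[OF \<tau>'(3)]
      by (intro trancl_mono_subset) blast
    also have "\<dots> = same_block \<tau>'"
      using equiv_partition_on[OF \<tau>'(1)] by (simp add: same_block_def equiv_def)
    finally show "E \<subseteq> same_block \<tau>'" .
  qed
  ultimately have "is_pjoin X \<rho> \<sigma> (X // E)"
    unfolding is_pjoin_def using partition_on_quotient[OF \<open>equiv X E\<close>] by blast
  then show ?thesis ..
qed

lemma saturated_block:
  assumes "partition_on X \<tau>" "finer Q \<tau>" "c \<in> \<tau>"
  shows "saturated Q c"
  unfolding saturated_def
proof
  fix b assume "b \<in> Q"
  then obtain c' where "c' \<in> \<tau>" "b \<subseteq> c'"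
    using assms(2) unfolding finer_def by blast
  then show "b \<subseteq> c \<or> b \<inter> c = {}"
    using disjointD[OF partition_onD2[OF assms(1)] \<open>c' \<in> \<tau>\<close> assms(3)] by blast
qed

lemma finer_top: "partition_on X P \<Longrightarrow> finer P {X}"
  unfolding finer_def partition_on_def by blast

lemma finer_split:
  assumes "partition_on X Q" "saturated Q S"
  shows "finer Q {S, X - S}"
  unfolding finer_def
proof
  fix b assume "b \<in> Q"
  then have "b \<subseteq> X" "b \<subseteq> S \<or> b \<inter> S = {}"
    using assms unfolding partition_on_def saturated_def by blast+
  then show "\<exists>c\<in>{S, X - S}. b \<subseteq> c" by blast
qed

lemma pjoin_eq_top_iff:
  assumes \<rho>: "partition_on X \<rho>" and \<sigma>: "partition_on X \<sigma>" and "X \<noteq> {}"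
  shows "pjoin X \<rho> \<sigma> = {X} \<longleftrightarrow>
    (\<forall>S\<subseteq>X. saturated \<rho> S \<longrightarrow> saturated \<sigma> S \<longrightarrow> S = {} \<or> S = X)"
proof (intro iffI allI impI)
  fix S assume "pjoin X \<rho> \<sigma> = {X}" "S \<subseteq> X" "saturated \<rho> S" "saturated \<sigma> S"
  obtain \<tau> where "is_pjoin X \<rho> \<sigma> \<tau>"
    using ex_is_pjoin[OF \<rho> \<sigma>] ..
  have "\<tau> = {X}"
    using pjoin_eqI[OF \<open>is_pjoin X \<rho> \<sigma> \<tau>\<close>] \<open>pjoin X \<rho> \<sigma> = {X}\<close> by simp
  show "S = {} \<or> S = X"
  proof (rule ccontr)
    assume "\<not> (S = {} \<or> S = X)"
    then have "partition_on X {S, X - S}"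
      using \<open>S \<subseteq> X\<close> unfolding partition_on_def disjoint_def by auto
    then have "finer \<tau> {S, X - S}"
      using \<open>is_pjoin X \<rho> \<sigma> \<tau>\<close> finer_split \<rho> \<sigma> \<open>saturated \<rho> S\<close> \<open>saturated \<sigma> S\<close>
      unfolding is_pjoin_def by blast
    then show False
      using \<open>\<tau> = {X}\<close> \<open>S \<subseteq> X\<close> \<open>\<not> (S = {} \<or> S = X)\<close> unfolding finer_def by blast
  qed
next
  assume connected: "\<forall>S\<subseteq>X. saturated \<rho> S \<longrightarrow> saturated \<sigma> S \<longrightarrow> S = {} \<or> S = X"
  have "finer {X} \<tau>'" if \<tau>': "partition_on X \<tau>'" "finer \<rho> \<tau>'" "finer \<sigma> \<tau>'" for \<tau>'
  proof -
    obtain c where "c \<in> \<tau>'" "c \<noteq> {}"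
      using \<tau>'(1) \<open>X \<noteq> {}\<close> unfolding partition_on_def by blast
    moreover have "c \<subseteq> X"
      using \<tau>'(1) \<open>c \<in> \<tau>'\<close> unfolding partition_on_def by blast
    ultimately have "c = X"
      using connected saturated_block[OF \<tau>'(1)] \<tau>'(2,3) by blast
    then show ?thesis
      using \<open>c \<in> \<tau>'\<close> unfolding finer_def by blast
  qed
  then have "is_pjoin X \<rho> \<sigma> {X}"
    using finer_top[OF \<rho>] finer_top[OF \<sigma>] partition_on_space[OF \<open>X \<noteq> {}\<close>]
    unfolding is_pjoin_def by blast
  then show "pjoin X \<rho> \<sigma> = {X}"
    by (rule pjoin_eqI)
qed

section \<open>Connected graphs\<close>

definition edge_closed :: "'a set \<Rightarrow> ('a \<Rightarrow> 'a \<Rightarrow> bool) \<Rightarrow> 'a set \<Rightarrow> bool" where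
  "edge_closed V E A \<longleftrightarrow> A \<subseteq> V \<and> (\<forall>k\<in>A. \<forall>l\<in>V. E k l \<longrightarrow> l \<in> A)"

definition connected_graph :: "'a set \<Rightarrow> ('a \<Rightarrow> 'a \<Rightarrow> bool) \<Rightarrow> bool" where
  "connected_graph V E \<longleftrightarrow> (\<forall>A. edge_closed V E A \<longrightarrow> A = {} \<or> A = V)"

lemma edge_closed_Diff:
  assumes "symp E" "edge_closed V E A"
  shows "edge_closed V E (V - A)"
  using assms unfolding edge_closed_def symp_def by blast

lemma connected_graphI_root:
  assumes "v \<in> V" "symp E"
    and reach: "\<And>B. edge_closed V E B \<Longrightarrow> v \<in> B \<Longrightarrow> V \<subseteq> B"
  shows "connected_graph V E"
  unfolding connected_graph_def
proof (intro allI impI)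
  fix A assume A: "edge_closed V E A"
  show "A = {} \<or> A = V"
  proof (cases "v \<in> A")
    case True
    then show ?thesis
      using reach[OF A] A unfolding edge_closed_def by blast
  next
    case False
    then have "V \<subseteq> V - A"
      using reach[OF edge_closed_Diff[OF \<open>symp E\<close> A]] \<open>v \<in> V\<close> by blast
    then show ?thesis
      using A unfolding edge_closed_def by blast
  qed
qed

lemma connected_graph_cong:
  assumes "\<And>k l. k \<in> V \<Longrightarrow> l \<in> V \<Longrightarrow> E k l \<longleftrightarrow> E' k l"
  shows "connected_graph V E \<longleftrightarrow> connected_graph V E'"
proof -
  have "edge_closed V E A \<longleftrightarrow> edge_closed V E' A" for A
    using assms unfolding edge_closed_def by blast
  then show ?thesis
    unfolding connected_graph_def by simp
qed

primrec reachable_within :: "'a set \<Rightarrow> ('a \<Rightarrow> 'a \<Rightarrow> bool) \<Rightarrow> 'a \<Rightarrow> nat \<Rightarrow> 'a set" where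
  "reachable_within V E v 0 = {v}"
| "reachable_within V E v (Suc k) =
     reachable_within V E v k \<union> {w \<in> V. \<exists>u\<in>reachable_within V E v k. E u w}"

lemma reachable_within_mono: "j \<le> k \<Longrightarrow> reachable_within V E v j \<subseteq> reachable_within V E v k"
  by (induction k) (auto simp: le_Suc_eq)

lemma reachable_within_subset: "v \<in> V \<Longrightarrow> reachable_within V E v k \<subseteq> V"
  by (induction k) auto

lemma ex_reachable_within_eq:
  assumes "finite V" "v \<in> V" "connected_graph V E"
  shows "\<exists>m. reachable_within V E v m = V"
proof -
  let ?L = "reachable_within V E v"
  have "range ?L \<subseteq> Pow V"
    using reachable_within_subset[OF assms(2)] by blast
  then have "finite (range ?L)"
    using assms(1) finite_subset by blast
  then have "\<not> inj ?L"
    using finite_imageD infinite_UNIV_nat by blast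
  then obtain j k where "j < k" "?L j = ?L k"
    unfolding inj_def by (metis linorder_neqE_nat)
  then have "?L (Suc j) \<subseteq> ?L j"
    using reachable_within_mono[of "Suc j" k V E v] by simp
  then have "edge_closed V E (?L j)"
    using reachable_within_subset[OF assms(2)] unfolding edge_closed_def by auto
  moreover have "v \<in> ?L j"
    using reachable_within_mono[of 0 j V E v] by auto
  ultimately have "?L j = V"
    using assms(3) unfolding connected_graph_def by blast
  then show ?thesis ..
qed

lemma connected_graph_Diff_outermost:
  assumes "v \<in> V" "symp E" "i \<notin> reachable_within V E v p"
    and exhausted: "reachable_within V E v (Suc p) = V"
  shows "connected_graph (V - {i}) E"
proof (rule connected_graphI_root)
  let ?L = "reachable_within V E v"
  show "v \<in> V - {i}"
    using assms(1,3) reachable_within_mono[of 0 p V E v] by auto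
  fix B assume B: "edge_closed (V - {i}) E B" "v \<in> B"
  have "?L j \<subseteq> B" if "j \<le> p" for j
    using that
  proof (induction j)
    case 0
    then show ?case using B(2) by simp
  next
    case (Suc j)
    show ?case
    proof
      fix w assume w: "w \<in> ?L (Suc j)"
      then have "w \<in> V - {i}"
        using assms(3) Suc(2) reachable_within_mono[of "Suc j" p V E v]
          reachable_within_subset[OF \<open>v \<in> V\<close>] by blast
      moreover have "w \<in> ?L j \<or> (\<exists>u\<in>?L j. E u w)"
        using w by auto
      ultimately show "w \<in> B"
        using Suc B(1) unfolding edge_closed_def by auto
    qed
  qed
  then have "?L p \<subseteq> B" by blast
  show "V - {i} \<subseteq> B"
  proof
    fix w assume w: "w \<in> V - {i}"
    then have "w \<in> ?L p \<or> (\<exists>u\<in>?L p. E u w)"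
      using exhausted by auto
    then show "w \<in> B"
      using \<open>?L p \<subseteq> B\<close> B(1) w unfolding edge_closed_def by blast
  qed
qed (rule assms(2))

lemma connected_graph_remove_vertex:
  assumes "finite V" "V \<noteq> {}" "symp E" "connected_graph V E"
  shows "\<exists>i\<in>V. connected_graph (V - {i}) E"
proof -
  obtain v where "v \<in> V"
    using assms(2) by blast
  let ?L = "reachable_within V E v"
  obtain m where "?L m = V"
    using ex_reachable_within_eq[OF assms(1) \<open>v \<in> V\<close> assms(4)] ..
  show ?thesis
  proof (cases "?L 0 = V")
    case True
    then have "V - {v} = {}" by auto
    then show ?thesis
      using \<open>v \<in> V\<close> unfolding connected_graph_def edge_closed_def by auto
  next
    case False
    then obtain p where p: "?L p \<noteq> V" "?L (Suc p) = V"
      using ex_least_nat_less[of "\<lambda>k. ?L k = V" m] \<open>?L m = V\<close> by blast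
    then obtain i where "i \<in> V" "i \<notin> ?L p"
      using reachable_within_subset[OF \<open>v \<in> V\<close>] by blast
    have "connected_graph (V - {i}) E"
      using connected_graph_Diff_outermost[OF \<open>v \<in> V\<close> assms(3) \<open>i \<notin> ?L p\<close> p(2)] .
    then show ?thesis
      using \<open>i \<in> V\<close> ..
  qed
qed

section \<open>Partitions of a grid and the graph of its rows\<close>

definition row_adj :: "('a \<times> 'b) set set \<Rightarrow> 'a \<Rightarrow> 'a \<Rightarrow> bool" where
  "row_adj \<rho> k l \<longleftrightarrow> (\<exists>b\<in>\<rho>. \<exists>x y. (k, x) \<in> b \<and> (l, y) \<in> b)"

lemma symp_row_adj: "symp (row_adj \<rho>)"
  unfolding symp_def row_adj_def by blast

lemma partition_on_rows: "C \<noteq> {} \<Longrightarrow> partition_on (V \<times> C) ((\<lambda>k. {k} \<times> C) ` V)"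
  unfolding partition_on_def disjoint_def by auto

lemma saturated_rows_iff:
  assumes "S \<subseteq> V \<times> C"
  shows "saturated ((\<lambda>k. {k} \<times> C) ` V) S \<longleftrightarrow> S = fst ` S \<times> C"
proof
  assume sat: "saturated ((\<lambda>k. {k} \<times> C) ` V) S"
  have "fst ` S \<times> C \<subseteq> S"
  proof
    fix p assume "p \<in> fst ` S \<times> C"
    then obtain k c where p: "p = (k, c)" "k \<in> fst ` S" "c \<in> C"
      by blast
    then obtain x where "(k, x) \<in> S"
      by force
    then have "k \<in> V" "(k, x) \<in> {k} \<times> C \<inter> S"
      using assms by auto
    moreover have "{k} \<times> C \<subseteq> S \<or> {k} \<times> C \<inter> S = {}"
      using sat \<open>k \<in> V\<close> unfolding saturated_def by simp
    ultimately have "{k} \<times> C \<subseteq> S"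
      by blast
    then show "p \<in> S"
      using p by blast
  qed
  then show "S = fst ` S \<times> C"
    using assms by force
next
  assume "S = fst ` S \<times> C"
  then show "saturated ((\<lambda>k. {k} \<times> C) ` V) S"
    unfolding saturated_def by blast
qed

lemma saturated_Times_if_edge_closed:
  assumes \<rho>: "partition_on (V \<times> C) \<rho>" and closed: "edge_closed V (row_adj \<rho>) A"
  shows "saturated \<rho> (A \<times> C)"
  unfolding saturated_def
proof
  fix b assume "b \<in> \<rho>"
  show "b \<subseteq> A \<times> C \<or> b \<inter> A \<times> C = {}"
  proof (rule disjCI)
    assume "b \<inter> A \<times> C \<noteq> {}"
    then obtain k x where "(k, x) \<in> b" "k \<in> A"
      by blast
    show "b \<subseteq> A \<times> C"
    proof
      fix p assume "p \<in> b"
      then obtain l y where "p = (l, y)" "l \<in> V" "y \<in> C"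
        using \<rho> \<open>b \<in> \<rho>\<close> unfolding partition_on_def by blast
      moreover have "row_adj \<rho> k l"
        unfolding row_adj_def using \<open>b \<in> \<rho>\<close> \<open>(k, x) \<in> b\<close> \<open>p \<in> b\<close> \<open>p = (l, y)\<close> by blast
      ultimately show "p \<in> A \<times> C"
        using closed \<open>k \<in> A\<close> unfolding edge_closed_def by blast
    qed
  qed
qed

lemma saturated_Times_iff_edge_closed:
  assumes \<rho>: "partition_on (V \<times> C) \<rho>" and "A \<subseteq> V"
  shows "saturated \<rho> (A \<times> C) \<longleftrightarrow> edge_closed V (row_adj \<rho>) A"
proof
  assume sat: "saturated \<rho> (A \<times> C)"
  show "edge_closed V (row_adj \<rho>) A"
    unfolding edge_closed_def
  proof (intro conjI ballI impI)
    fix k l assume "k \<in> A" "l \<in> V" "row_adj \<rho> k l"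
    then obtain b x y where "b \<in> \<rho>" "(k, x) \<in> b" "(l, y) \<in> b"
      unfolding row_adj_def by blast
    moreover from this have "(k, x) \<in> A \<times> C"
      using \<rho> \<open>k \<in> A\<close> unfolding partition_on_def by blast
    ultimately have "b \<subseteq> A \<times> C"
      using sat unfolding saturated_def by blast
    then show "l \<in> A"
      using \<open>(l, y) \<in> b\<close> by blast
  qed (rule assms(2))
qed (rule saturated_Times_if_edge_closed[OF \<rho>])

lemma pjoin_rows_eq_top_iff:
  assumes \<rho>: "partition_on (V \<times> C) \<rho>" and "V \<noteq> {}" "C \<noteq> {}"
  shows "pjoin (V \<times> C) \<rho> ((\<lambda>k. {k} \<times> C) ` V) = {V \<times> C} \<longleftrightarrow> connected_graph V (row_adj \<rho>)"
proof -
  let ?rows = "(\<lambda>k. {k} \<times> C) ` V"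
  have "(\<forall>S\<subseteq>V \<times> C. saturated \<rho> S \<longrightarrow> saturated ?rows S \<longrightarrow> S = {} \<or> S = V \<times> C)
      \<longleftrightarrow> (\<forall>A\<subseteq>V. saturated \<rho> (A \<times> C) \<longrightarrow> A = {} \<or> A = V)"
  proof (intro iffI allI impI)
    fix A assume "\<forall>S\<subseteq>V \<times> C. saturated \<rho> S \<longrightarrow> saturated ?rows S \<longrightarrow> S = {} \<or> S = V \<times> C"
      and "A \<subseteq> V" "saturated \<rho> (A \<times> C)"
    moreover have "A \<times> C \<subseteq> V \<times> C"
      using \<open>A \<subseteq> V\<close> by blast
    moreover have "saturated ?rows (A \<times> C)"
      using saturated_rows_iff[OF \<open>A \<times> C \<subseteq> V \<times> C\<close>] \<open>C \<noteq> {}\<close> by simp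
    ultimately have "A \<times> C = {} \<or> A \<times> C = V \<times> C"
      by blast
    then show "A = {} \<or> A = V"
      using \<open>C \<noteq> {}\<close> by (auto simp: times_eq_iff)
  next
    fix S assume connected: "\<forall>A\<subseteq>V. saturated \<rho> (A \<times> C) \<longrightarrow> A = {} \<or> A = V"
      and "S \<subseteq> V \<times> C" "saturated \<rho> S" "saturated ?rows S"
    define A where "A = fst ` S"
    have "S = A \<times> C"
      unfolding A_def using saturated_rows_iff[OF \<open>S \<subseteq> V \<times> C\<close>] \<open>saturated ?rows S\<close> by blast
    moreover have "A \<subseteq> V"
      unfolding A_def using \<open>S \<subseteq> V \<times> C\<close> by force
    ultimately have "A = {} \<or> A = V"
      using connected \<open>saturated \<rho> S\<close> by simp
    then show "S = {} \<or> S = V \<times> C"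
      using \<open>S = A \<times> C\<close> by auto
  qed
  also have "\<dots> \<longleftrightarrow> connected_graph V (row_adj \<rho>)"
    unfolding connected_graph_def
    using saturated_Times_iff_edge_closed[OF \<rho>] edge_closed_def by metis
  finally show ?thesis
    using pjoin_eq_top_iff[OF \<rho> partition_on_rows] assms(2,3) by simp
qed

lemma partition_on_restr:
  assumes "partition_on (V \<times> {1..r}) \<rho>"
  shows "partition_on ((V - {i}) \<times> {1..r}) (restr r \<rho> i)"
proof -
  have "restr r \<rho> i = (\<inter>) (- piblk r i) ` \<rho> - {{}}"
    unfolding restr_def by blast
  moreover have "(V - {i}) \<times> {1..r} = - piblk r i \<inter> V \<times> {1..r}"
    unfolding piblk_def by auto
  ultimately show ?thesis
    using partition_on_restrict[OF assms, of "- piblk r i"] by simp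
qed

lemma row_adj_restr:
  assumes "k \<noteq> i" "l \<noteq> i"
  shows "row_adj (restr r \<rho> i) k l \<longleftrightarrow> row_adj \<rho> k l"
proof
  assume "row_adj (restr r \<rho> i) k l"
  then obtain c x y where "c \<in> restr r \<rho> i" "(k, x) \<in> c" "(l, y) \<in> c"
    unfolding row_adj_def by blast
  moreover from this obtain b where "b \<in> \<rho>" "c \<subseteq> b"
    unfolding restr_def by blast
  ultimately show "row_adj \<rho> k l"
    unfolding row_adj_def by blast
next
  assume "row_adj \<rho> k l"
  then obtain b x y where "b \<in> \<rho>" "(k, x) \<in> b" "(l, y) \<in> b"
    unfolding row_adj_def by blast
  moreover have "(k, x) \<notin> piblk r i" "(l, y) \<notin> piblk r i"
    using assms unfolding piblk_def by auto
  ultimately have "b - piblk r i \<in> restr r \<rho> i" "(k, x) \<in> b - piblk r i" "(l, y) \<in> b - piblk r i"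
    unfolding restr_def by blast+
  then show "row_adj (restr r \<rho> i) k l"
    unfolding row_adj_def by meson
qed

theorem lemma2p6:
  fixes n r :: nat and \<rho> :: "(nat \<times> nat) set set"
  assumes "n \<ge> 2" and "r \<ge> 1"
    and "partition_on ({1..n} \<times> {1..r}) \<rho>"
    and "pjoin ({1..n} \<times> {1..r}) \<rho> (piblk r ` {1..n}) = {{1..n} \<times> {1..r}}"
  shows "\<exists>i\<in>{1..n}.
           partition_on (({1..n} - {i}) \<times> {1..r}) (restr r \<rho> i) \<and>
           pjoin (({1..n} - {i}) \<times> {1..r}) (restr r \<rho> i) (piblk r ` ({1..n} - {i}))
             = {({1..n} - {i}) \<times> {1..r}}"
proof -
  have rows: "piblk r = (\<lambda>k. {k} \<times> {1..r})"
    by (simp add: fun_eq_iff piblk_def)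
  have "{1..n} \<noteq> {}" "{1..r} \<noteq> {}"
    using assms(1,2) by simp_all
  have "connected_graph {1..n} (row_adj \<rho>)"
    using pjoin_rows_eq_top_iff[OF assms(3) \<open>{1..n} \<noteq> {}\<close> \<open>{1..r} \<noteq> {}\<close>] assms(4)
    unfolding rows by simp
  then obtain i where i: "i \<in> {1..n}" "connected_graph ({1..n} - {i}) (row_adj \<rho>)"
    using connected_graph_remove_vertex[OF finite_atLeastAtMost \<open>{1..n} \<noteq> {}\<close> symp_row_adj]
    by blast
  have "connected_graph ({1..n} - {i}) (row_adj (restr r \<rho> i))"
    using i(2) connected_graph_cong[of "{1..n} - {i}" "row_adj (restr r \<rho> i)" "row_adj \<rho>"]
    by (simp add: row_adj_restr)
  moreover have restr: "partition_on (({1..n} - {i}) \<times> {1..r}) (restr r \<rho> i)"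
    using partition_on_restr[OF assms(3)] .
  moreover have "{1..n} - {i} \<noteq> {}"
    using assms(1) by (cases "i = 1") (auto simp: subset_singleton_iff)
  ultimately show ?thesis
    using pjoin_rows_eq_top_iff[OF restr _ \<open>{1..r} \<noteq> {}\<close>] i(1) unfolding rows by blast
qed

end
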